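(* The sequence $\rho_d$ satisfies $\min_{d\geqslant2}\rho_d>0$, and there is a numerical constant $C>0$ such that $\frac1{C(d+2)^2}\leqslant1-\rho_d$ for all $d\geqslant2$.
   Context: Let $g(\theta)=\cos^{-1}\!\big(\frac{(\pi-\theta)\cos\theta+\sin\theta}{\pi}\big)$, $\breve\theta_0=\pi$, $\breve\theta_i=g(\breve\theta_{i-1})$ for $i\geqslant1$, and $\rho_d:=\frac{2\sin\breve\theta_d}{\pi}+\frac{\pi-2\breve\theta_d}{\pi}\sum_{i=0}^{d-1}\frac{\sin\breve\theta_i}{\pi}\prod_{j=i+1}^{d-1}\frac{\pi-\breve\theta_j}{\pi}$. *)

theory Defs
  imports Complex_Main
begin

definition g_map :: "real \<Rightarrow> real" where
  "g_map \<theta> = arccos (((pi - \<theta>) * cos \<theta> + sin \<theta>) / pi)"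

fun theta_seq :: "nat \<Rightarrow> real" where
  "theta_seq 0 = pi"
| "theta_seq (Suc i) = g_map (theta_seq i)"

definition rho :: "nat \<Rightarrow> real" where
  "rho d = 2 * sin (theta_seq d) / pi
     + (pi - 2 * theta_seq d) / pi *
       (\<Sum>i<d. sin (theta_seq i) / pi * (\<Prod>j\<in>{i+1..<d}. (pi - theta_seq j) / pi))"

end

theory Submission
  imports Defs "HOL-Analysis.Complex_Transcendental"
begin

text \<open>The sum in \<open>\<rho>\<^sub>d\<close> obeys the recursion of \<open>cos \<theta>\<^sub>d\<close>, so
  \<open>\<rho>\<^sub>d = h \<theta>\<^sub>d\<close> with \<open>h t = (2 sin t + (\<pi> - 2t) cos t) / \<pi>\<close>, a function
  decreasing on \<open>[0, \<pi>/2]\<close>. The angles decrease from \<open>\<theta>\<^sub>1 = \<pi>/2\<close>, so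
  \<open>\<rho>\<^sub>d\<close> is smallest at \<open>d = 2\<close>. Moreover \<open>g t \<ge> t / (1 + t)\<close>, i.e.
  \<open>1/\<theta>\<^sub>d\<close> grows by at most 1 per step, hence \<open>\<theta>\<^sub>d \<ge> 1/d\<close>, and
  \<open>h t \<le> 1 - t\<^sup>2/32\<close> turns this into the quadratic gap. Both estimates on
  \<open>g\<close> and \<open>h\<close> reduce to low-order Taylor bounds for \<open>sin\<close> and \<open>cos\<close>.\<close>

lemma deriv_nonneg_imp_le:
  fixes f f' :: "real \<Rightarrow> real"
  assumes "a \<le> b"
    and "\<And>u. a \<le> u \<Longrightarrow> u \<le> b \<Longrightarrow> (f has_real_derivative f' u) (at u)"
    and "\<And>u. a \<le> u \<Longrightarrow> u \<le> b \<Longrightarrow> 0 \<le> f' u"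
  shows "f a \<le> f b"
  using DERIV_nonneg_imp_nondecreasing[OF assms(1)] assms(2,3) by blast

lemma cos_ge_one_minus_sq_half: "1 - x^2/2 \<le> cos (x::real)"
proof -
  have "cos 0 - 1 + 0^2/2 \<le> cos \<bar>x\<bar> - 1 + \<bar>x\<bar>^2/2"
    by (rule deriv_nonneg_imp_le[where f = "\<lambda>x. cos x - 1 + x^2/2"
      and f' = "\<lambda>u. u - sin u"])
       (auto intro!: derivative_eq_intros sin_x_le_x)
  then show ?thesis by simp
qed

lemma sin_ge_cubic:
  fixes x :: real assumes "0 \<le> x" shows "x - x^3/6 \<le> sin x"
proof -
  have "sin 0 - 0 + 0^3/6 \<le> sin x - x + x^3/6"
  proof (rule deriv_nonneg_imp_le[where f = "\<lambda>x. sin x - x + x^3/6"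
      and f' = "\<lambda>u. cos u - 1 + u^2/2"])
    fix u :: real
    show "((\<lambda>x. sin x - x + x^3/6) has_real_derivative cos u - 1 + u^2/2) (at u)"
      by (auto intro!: derivative_eq_intros simp: power2_eq_square)
    show "0 \<le> cos u - 1 + u^2/2" using cos_ge_one_minus_sq_half[of u] by simp
  qed (fact assms)
  then show ?thesis by simp
qed

lemma cos_le_quartic: "cos x \<le> 1 - x^2/2 + x^4/(24::real)"
proof -
  have "1 - 0^2/2 + 0^4/24 - cos 0 \<le> 1 - \<bar>x\<bar>^2/2 + \<bar>x\<bar>^4/24 - cos \<bar>x\<bar>"
  proof (rule deriv_nonneg_imp_le[where f = "\<lambda>x. 1 - x^2/2 + x^4/24 - cos x"
      and f' = "\<lambda>u. sin u - u + u^3/6"])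
    fix u :: real
    show "((\<lambda>x. 1 - x^2/2 + x^4/24 - cos x) has_real_derivative sin u - u + u^3/6) (at u)"
      by (auto intro!: derivative_eq_intros simp: power2_eq_square)
    show "0 \<le> u \<Longrightarrow> 0 \<le> sin u - u + u^3/6" using sin_ge_cubic[of u] by simp
  qed simp
  then show ?thesis by (simp add: power_even_abs_numeral)
qed

lemma x_cos_le_sin:
  fixes x :: real assumes "0 \<le> x" "x \<le> pi" shows "x * cos x \<le> sin x"
proof -
  have "sin 0 - 0 * cos 0 \<le> sin x - x * cos x"
  proof (rule deriv_nonneg_imp_le[where f = "\<lambda>x. sin x - x * cos x"
      and f' = "\<lambda>u. u * sin u"])
    fix u :: real
    show "((\<lambda>x. sin x - x * cos x) has_real_derivative u * sin u) (at u)"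
      by (auto intro!: derivative_eq_intros simp: algebra_simps)
    show "0 \<le> u \<Longrightarrow> u \<le> x \<Longrightarrow> 0 \<le> u * sin u" using assms by (simp add: sin_ge_zero)
  qed (fact assms)
  then show ?thesis by simp
qed

lemma sin_minus_x_cos_le:
  fixes x :: real assumes "0 \<le> x" shows "sin x - x * cos x \<le> x^3/3"
proof -
  have "0^3/3 - sin 0 + 0 * cos 0 \<le> x^3/3 - sin x + x * cos x"
  proof (rule deriv_nonneg_imp_le[where f = "\<lambda>x. x^3/3 - sin x + x * cos x"
      and f' = "\<lambda>u. u * (u - sin u)"])
    fix u :: real
    show "((\<lambda>x. x^3/3 - sin x + x * cos x) has_real_derivative u * (u - sin u)) (at u)"
      by (auto intro!: derivative_eq_intros simp: algebra_simps power2_eq_square)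
    show "0 \<le> u \<Longrightarrow> 0 \<le> u * (u - sin u)" using sin_x_le_x[of u] by simp
  qed (fact assms)
  then show ?thesis by simp
qed

definition g_cos :: "real \<Rightarrow> real" where
  "g_cos t = ((pi - t) * cos t + sin t) / pi"

lemma g_map_eq_arccos: "g_map t = arccos (g_cos t)"
  unfolding g_map_def g_cos_def ..

lemma g_cos_bounds:
  fixes t :: real assumes "0 \<le> t" "t \<le> pi"
  shows "-1 \<le> g_cos t" "g_cos t \<le> 1"
proof -
  have "-(pi - t) \<le> (pi - t) * cos t" "(pi - t) * cos t \<le> pi - t"
    using assms mult_left_mono[of "cos t" 1 "pi - t"] mult_left_mono[of "-1" "cos t" "pi - t"]
    by auto
  moreover have "0 \<le> sin t" "sin t \<le> t"
    using assms by (auto intro: sin_ge_zero sin_x_le_x)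
  ultimately show "-1 \<le> g_cos t" "g_cos t \<le> 1"
    unfolding g_cos_def using assms by (simp_all add: divide_simps)
qed

lemma cos_g_map: "0 \<le> t \<Longrightarrow> t \<le> pi \<Longrightarrow> cos (g_map t) = g_cos t"
  unfolding g_map_eq_arccos using g_cos_bounds by simp

lemma g_map_le:
  fixes t :: real assumes "0 \<le> t" "t \<le> pi"
  shows "g_map t \<le> t"
proof -
  have "cos t \<le> g_cos t"
    using x_cos_le_sin[OF assms] unfolding g_cos_def by (simp add: field_simps)
  then have "arccos (g_cos t) \<le> arccos (cos t)"
    using g_cos_bounds[OF assms] by (intro arccos_le_arccos) auto
  then show ?thesis
    unfolding g_map_eq_arccos using assms by (simp add: arccos_cos)
qed

text \<open>What remains of \<open>g_cos t \<le> cos (t / (1 + t))\<close> after inserting the Taylor bounds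
  of both sides.\<close>

lemma g_map_ge_polynomial_bound:
  fixes t :: real assumes "0 \<le> t" "t \<le> pi/2"
  shows "pi * (t/(1+t))^2/2 + t^3/3 \<le> pi * (t^2/2 - t^4/24)"
proof -
  have pi: "3 \<le> pi" "pi \<le> 16/5" using pi_gt3 pi_approx by auto
  have "(1 + t) * (pi * t + 8) \<le> (1 + 8/5) * ((16/5) * (8/5) + 8)"
    using assms pi by (intro mult_mono add_mono) auto
  also have "\<dots> \<le> 12 * pi" using pi by simp
  finally have "t^3 * ((1 + t) * (pi * t + 8)) \<le> t^3 * (12 * pi)"
    using assms by (intro mult_left_mono) auto
  then have "pi * t^4/24 + t^3/3 \<le> pi * (t^3 / (1+t)) / 2"
    using assms(1) by (simp add: field_simps power_def)
  also have "t^3 / (1+t) = t^3 * (1 + t) / (1+t)^2"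
    using assms(1) by (simp add: power2_eq_square)
  also have "\<dots> \<le> t^3 * (2 + t) / (1+t)^2"
    using assms(1) by (intro divide_right_mono mult_left_mono) auto
  also have "\<dots> = t^2 - (t/(1+t))^2"
    using assms(1) by (simp add: power_divide divide_simps)
                      (simp add: algebra_simps power2_eq_square power3_eq_cube)
  finally show ?thesis by (simp add: algebra_simps)
qed

lemma g_map_ge:
  fixes t :: real assumes "0 \<le> t" "t \<le> pi/2"
  shows "t / (1 + t) \<le> g_map t"
proof -
  define s where "s = t / (1 + t)"
  have "s \<le> t" using assms by (simp add: s_def divide_simps algebra_simps)
  then have s: "0 \<le> s" "s \<le> pi" using assms by (auto simp: s_def)
  have "pi * (1 - g_cos t) = pi * (1 - cos t) - (sin t - t * cos t)"
    unfolding g_cos_def by (simp add: field_simps)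
  also have "\<dots> \<ge> pi * (t^2/2 - t^4/24) - t^3/3"
  proof -
    have "pi * (t^2/2 - t^4/24) \<le> pi * (1 - cos t)"
      using cos_le_quartic[of t] by (intro mult_left_mono) auto
    then show ?thesis using sin_minus_x_cos_le[OF assms(1)] by linarith
  qed
  finally have "pi * (s^2/2) \<le> pi * (1 - g_cos t)"
    using g_map_ge_polynomial_bound[OF assms] unfolding s_def by linarith
  then have "g_cos t \<le> 1 - s^2/2" by (simp add: mult_le_cancel_left_pos)
  also have "\<dots> \<le> cos s" by (rule cos_ge_one_minus_sq_half)
  finally have "arccos (cos s) \<le> arccos (g_cos t)"
    using g_cos_bounds[of t] assms by (intro arccos_le_arccos) auto
  then show ?thesis
    unfolding g_map_eq_arccos s_def[symmetric] using s by (simp add: arccos_cos)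
qed

lemma g_map_pi: "g_map pi = pi/2"
  by (simp add: g_map_def)

lemma theta_seq_bounds:
  assumes "1 \<le> d"
  shows "1 / real d \<le> theta_seq d \<and> theta_seq d \<le> pi/2"
  using assms
proof (induction d rule: dec_induct)
  case base
  then show ?case using pi_ge_two by (simp add: g_map_pi)
next
  case (step n)
  let ?t = "theta_seq n"
  have t: "1 / real n \<le> ?t" "?t \<le> pi/2" using step.IH by auto
  have "0 < 1 / real n" using step.hyps by simp
  with t have "0 < ?t" by linarith
  have "1 / real (Suc n) \<le> ?t / (1 + ?t)"
    using t \<open>0 < ?t\<close> step.hyps by (simp add: field_simps)
  also have "\<dots> \<le> theta_seq (Suc n)" using g_map_ge t \<open>0 < ?t\<close> by simp
  finally show ?case using g_map_le[of ?t] t \<open>0 < ?t\<close> by simp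
qed

lemma theta_seq_pos:
  assumes "1 \<le> d" shows "0 < theta_seq d"
proof -
  have "0 < 1 / real d" using assms by simp
  with theta_seq_bounds[OF assms] show ?thesis by linarith
qed

lemma theta_seq_antimono:
  assumes "1 \<le> m" "m \<le> n"
  shows "theta_seq n \<le> theta_seq m"
  using assms(2)
proof (induction n rule: dec_induct)
  case (step k)
  with assms(1) have "0 \<le> theta_seq k" "theta_seq k \<le> pi"
    using theta_seq_pos[of k] theta_seq_bounds[of k] by auto
  then show ?case using g_map_le step.IH by fastforce
qed simp

definition theta_sum :: "nat \<Rightarrow> real" where
  "theta_sum d = (\<Sum>i<d. sin (theta_seq i) / pi * (\<Prod>j\<in>{i+1..<d}. (pi - theta_seq j) / pi))"

lemma theta_sum_Suc:
  "theta_sum (Suc d) = theta_sum d * ((pi - theta_seq d) / pi) + sin (theta_seq d) / pi"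
proof -
  let ?q = "\<lambda>j. (pi - theta_seq j) / pi"
  have "theta_sum (Suc d)
      = (\<Sum>i<d. sin (theta_seq i) / pi * prod ?q {i+1..<Suc d}) + sin (theta_seq d) / pi"
    unfolding theta_sum_def by simp
  also have "(\<Sum>i<d. sin (theta_seq i) / pi * prod ?q {i+1..<Suc d})
      = (\<Sum>i<d. sin (theta_seq i) / pi * prod ?q {i+1..<d} * ?q d)"
    by (rule sum.cong) (simp_all add: prod.atLeastLessThan_Suc)
  also have "\<dots> = theta_sum d * ?q d"
    unfolding theta_sum_def sum_distrib_right ..
  finally show ?thesis .
qed

lemma theta_sum_eq_cos: "1 \<le> d \<Longrightarrow> theta_sum d = cos (theta_seq d)"
proof (induction d rule: dec_induct)
  case base
  then show ?case by (simp add: theta_sum_def g_map_pi)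
next
  case (step n)
  then have "0 \<le> theta_seq n" "theta_seq n \<le> pi"
    using theta_seq_pos[of n] theta_seq_bounds[of n] by auto
  then show ?case
    using step.IH by (simp add: theta_sum_Suc cos_g_map g_cos_def field_simps)
qed

definition rho_of_angle :: "real \<Rightarrow> real" where
  "rho_of_angle t = (2 * sin t + (pi - 2 * t) * cos t) / pi"

lemma rho_eq_rho_of_angle: "1 \<le> d \<Longrightarrow> rho d = rho_of_angle (theta_seq d)"
  using theta_sum_eq_cos[of d]
  unfolding rho_def rho_of_angle_def theta_sum_def[symmetric] by (simp add: field_simps)

lemma rho_of_angle_antimono:
  assumes "0 \<le> a" "a \<le> b" "b \<le> pi/2"
  shows "rho_of_angle b \<le> rho_of_angle a"
proof (rule DERIV_nonpos_imp_nonincreasing[OF assms(2)])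
  fix u assume u: "a \<le> u" "u \<le> b"
  have "(rho_of_angle has_real_derivative - ((pi - 2 * u) * sin u) / pi) (at u)"
    unfolding rho_of_angle_def[abs_def] by (auto intro!: derivative_eq_intros simp: field_simps)
  moreover have "0 \<le> (pi - 2 * u) * sin u" using u assms by (simp add: sin_ge_zero)
  ultimately show "\<exists>y. (rho_of_angle has_real_derivative y) (at u) \<and> y \<le> 0" by force
qed

lemma rho_of_angle_pos:
  assumes "0 < t" "t \<le> pi/2"
  shows "0 < rho_of_angle t"
proof -
  have "0 < sin t" using assms by (intro sin_gt_zero) auto
  moreover have "0 \<le> (pi - 2 * t) * cos t" using assms by (intro mult_nonneg_nonneg cos_ge_zero) auto
  ultimately show ?thesis unfolding rho_of_angle_def by simp
qed

lemma rho_of_angle_le: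
  fixes t :: real assumes "0 \<le> t" "t \<le> pi/2"
  shows "rho_of_angle t \<le> 1 - t^2/32"
proof -
  have "t^2 \<le> (8/5)^2" using assms pi_approx by (intro power_mono) auto
  then have "t^2 \<le> 64/25" by (simp add: power_divide)
  then have "pi * t^2 \<le> pi * (64/25)" by (intro mult_left_mono) auto
  then have "pi * t^2/24 + 2*t/3 \<le> pi * (8/75) + pi/3" using assms by linarith
  also have "\<dots> \<le> 15*pi/32" by simp
  finally have "t^2 * (pi * t^2/24 + 2*t/3) \<le> t^2 * (15*pi/32)" by (intro mult_left_mono) auto
  then have gap: "pi * t^4/24 + 2*t^3/3 \<le> 15*pi*t^2/32" by (simp add: algebra_simps power_def)
  have "pi * (t^2/2 - t^4/24) \<le> pi * (1 - cos t)"
    using cos_le_quartic[of t] by (intro mult_left_mono) auto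
  then have "pi * t^2/32 \<le> pi * (1 - cos t) - 2 * (sin t - t * cos t)"
    using sin_minus_x_cos_le[OF assms(1)] gap by (simp add: algebra_simps)
  also have "\<dots> = pi * (1 - rho_of_angle t)"
    unfolding rho_of_angle_def by (simp add: field_simps)
  finally have "pi * (t^2/32) \<le> pi * (1 - rho_of_angle t)" by simp
  then show ?thesis by (simp add: mult_le_cancel_left_pos)
qed

lemma rho_2_le_rho:
  assumes "2 \<le> d" shows "rho 2 \<le> rho d"
proof -
  have "rho_of_angle (theta_seq 2) \<le> rho_of_angle (theta_seq d)"
  proof (rule rho_of_angle_antimono)
    show "0 \<le> theta_seq d" using theta_seq_pos[of d] assms by simp
    show "theta_seq d \<le> theta_seq 2" using theta_seq_antimono[of 2 d] assms by simp
    show "theta_seq 2 \<le> pi/2" using theta_seq_bounds[of 2] by simp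
  qed
  then show ?thesis using rho_eq_rho_of_angle[of 2] rho_eq_rho_of_angle[of d] assms by simp
qed

lemma rho_2_pos: "0 < rho 2"
proof -
  have "0 < rho_of_angle (theta_seq 2)"
    using theta_seq_pos[of 2] theta_seq_bounds[of 2] by (intro rho_of_angle_pos) auto
  then show ?thesis using rho_eq_rho_of_angle[of 2] by simp
qed

lemma one_minus_rho_ge:
  assumes "1 \<le> d" shows "1 / (32 * (real d)^2) \<le> 1 - rho d"
proof -
  have "1 / real d \<le> theta_seq d" "theta_seq d \<le> pi/2" using theta_seq_bounds[OF assms] by auto
  then have "(1 / real d)^2 / 32 \<le> (theta_seq d)^2 / 32"
    by (intro divide_right_mono power_mono) auto
  also have "\<dots> \<le> 1 - rho d"
    using rho_of_angle_le[of "theta_seq d"] theta_seq_pos[OF assms] \<open>theta_seq d \<le> pi/2\<close>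
      rho_eq_rho_of_angle[OF assms] by simp
  finally show ?thesis by (simp add: power_divide)
qed

theorem lemma22:
  shows "(\<exists>d0\<ge>2. (\<forall>d\<ge>2. rho d0 \<le> rho d) \<and> rho d0 > 0)
       \<and> (\<exists>C>0. \<forall>d::nat\<ge>2. 1 / (C * (real d + 2)^2) \<le> 1 - rho d)"
proof
  show "\<exists>d0\<ge>2. (\<forall>d\<ge>2. rho d0 \<le> rho d) \<and> rho d0 > 0"
    using rho_2_le_rho rho_2_pos by blast
  have "1 / (32 * (real d + 2)^2) \<le> 1 - rho d" if "2 \<le> d" for d :: nat
  proof -
    have "1 / (32 * (real d + 2)^2) \<le> 1 / (32 * (real d)^2)"
      using that by (intro divide_left_mono mult_left_mono power_mono) auto
    also have "\<dots> \<le> 1 - rho d" using one_minus_rho_ge that by simp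
    finally show ?thesis .
  qed
  then show "\<exists>C>0. \<forall>d::nat\<ge>2. 1 / (C * (real d + 2)^2) \<le> 1 - rho d"
    by (intro exI[of _ 32]) auto
qed

end
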